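(* Let $\varphi_0\in\mathbb{R}$ and let $v$ be a smooth function with $v(\varphi)>0$ and $v'(\varphi)>0$ for all $\varphi\ge\varphi_0$. Let $R_0=\{(\varphi,h)\in\mathbb{R}^2:\varphi_0\le\varphi<\infty,\ \sqrt{v(\varphi)}<h<\infty\}$ and let $\Gamma$ be the curve $h=\sqrt{v(\varphi)}$. Let $h$ be the solution of $h'=\sqrt{h^2-v}$ with initial value $h(\varphi_0)=h_0$, $h_0>\sqrt{v(\varphi_0)}$. Then exactly one of the following holds: either (type A) there is a finite $\varphi_1>\varphi_0$ such that the solution exists in $R_0$ on $[\varphi_0,\varphi_1)$ and reaches the lower boundary $\Gamma$ at $\varphi_1$, i.e. $h(\varphi)\to\sqrt{v(\varphi_1)}$ as $\varphi\to\varphi_1^-$, with a horizontal half-tangent there ($h'(\varphi)\to0$); or (type B) the solution exists and remains in $R_0$ for all $\varphi>\varphi_0$. *)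

theory Defs
  imports "HOL-Analysis.Analysis"
begin

definition ode_sol_in_R0 ::
  "(real \<Rightarrow> real) \<Rightarrow> real \<Rightarrow> real \<Rightarrow> real set \<Rightarrow> (real \<Rightarrow> real) \<Rightarrow> (real \<Rightarrow> real) \<Rightarrow> bool" where
  "ode_sol_in_R0 v phi0 h0 I h dh \<longleftrightarrow>
     h phi0 = h0 \<and>
     (\<forall>phi\<in>I. (h has_real_derivative dh phi) (at phi within I)
               \<and> dh phi = sqrt ((h phi)\<^sup>2 - v phi)
               \<and> sqrt (v phi) < h phi)"

end

theory Submission
  imports Defs
begin

text \<open>
  Truncating the right-hand side to \<open>sqrt (max (h\<^sup>2 - v) 0)\<close> gives a field that is
  continuous, nonnegative, nondecreasing in \<open>h\<close> and bounded by \<open>h\<close>. Monotone Picard iteration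
  from the constant \<open>h0\<close> therefore increases, stays below \<open>h0 * exp (phi - phi0)\<close>, and converges
  to a global solution of the truncated equation. Either this solution stays above \<open>\<Gamma>\<close>
  forever (type B), or at its first contact \<open>phi1\<close> with \<open>\<Gamma>\<close> both \<open>h - sqrt v\<close> and
  \<open>h' = sqrt (h\<^sup>2 - v)\<close> tend to \<open>0\<close> (type A).

  The alternatives exclude each other because solutions in \<open>R0\<close> are unique: the difference
  \<open>d\<close> of two of them satisfies \<open>d' = c d\<close> with the continuous coefficient
  \<open>c = (h\<^sub>1 + h\<^sub>2) / (h\<^sub>1' + h\<^sub>2')\<close>, so \<open>d\<close> vanishes. A type B solution would therefore
  agree with the type A one on \<open>[phi0, phi1)\<close> and reach \<open>\<Gamma>\<close> at \<open>phi1\<close>.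
\<close>

lemma at_within_Icc_eq_atLeast:
  fixes a t b :: real
  assumes "a \<le> t" "t < b"
  shows "at t within {a..b} = at t within {a..}"
  by (rule at_within_nhd[of t "{..<b}"]) (use assms in auto)

lemma continuous_on_atLeast_if_Icc:
  fixes f :: "real \<Rightarrow> 'a::topological_space"
  assumes "\<And>b. a < b \<Longrightarrow> continuous_on {a..b} f"
  shows "continuous_on {a..} f"
  unfolding continuous_on_eq_continuous_within
proof
  fix t assume t: "t \<in> {a..}"
  have "continuous (at t within {a..t+1}) f"
    using assms[of "t+1"] t by (auto simp: continuous_on_eq_continuous_within)
  then show "continuous (at t within {a..}) f"
    using at_within_Icc_eq_atLeast[of a t "t+1"] t by auto
qed

lemma continuous_on_atLeast_at_leftD:
  fixes f :: "real \<Rightarrow> real"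
  assumes "continuous_on {a..} f" "a < b"
  shows "(f \<longlongrightarrow> f b) (at_left b)"
  using continuous_on_subset[OF assms(1), of "{a..b}"] assms(2)
  by (auto intro: continuous_on_Icc_at_leftD)

lemma integral_has_real_derivative_atLeast:
  fixes g :: "real \<Rightarrow> real"
  assumes "continuous_on {a..} g" "a \<le> t"
  shows "((\<lambda>x. integral {a..x} g) has_real_derivative g t) (at t within {a..})"
proof -
  have "continuous_on {a..t+1} g" using assms(1) by (rule continuous_on_subset) auto
  then have "((\<lambda>x. integral {a..x} g) has_real_derivative g t) (at t within {a..t+1})"
    using assms by (intro integral_has_real_derivative) auto
  then show ?thesis using at_within_Icc_eq_atLeast[of a t "t+1"] assms by auto
qed

lemma integral_mult_exp_shift:
  fixes a t c :: real
  assumes "a \<le> t"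
  shows "integral {a..t} (\<lambda>s. c * exp (s - a)) = c * exp (t - a) - c"
proof -
  have "((\<lambda>s. c * exp (s - a)) has_integral (c * exp (t - a) - c * exp (a - a))) {a..t}"
    using assms
    by (intro fundamental_theorem_of_calculus)
       (auto simp: has_real_derivative_iff_has_vector_derivative[symmetric] intro!: derivative_eq_intros)
  from integral_unique[OF this] show ?thesis by simp
qed

lemma continuous_on_compose_field:
  fixes F :: "real \<Rightarrow> real \<Rightarrow> real"
  assumes "continuous_on (S \<times> UNIV) (\<lambda>(s, y). F s y)" "continuous_on S h"
  shows "continuous_on S (\<lambda>s. F s (h s))"
proof -
  have "continuous_on S (\<lambda>s. (\<lambda>(s, y). F s y) (s, h s))"
    by (rule continuous_on_compose2[OF assms(1)]) (intro continuous_intros assms(2), auto)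
  then show ?thesis by simp
qed

lemma tendsto_compose_field:
  fixes F :: "real \<Rightarrow> real \<Rightarrow> real"
  assumes "continuous_on (S \<times> UNIV) (\<lambda>(s, y). F s y)" "s \<in> S" "(f \<longlongrightarrow> y) G"
  shows "((\<lambda>x. F s (f x)) \<longlongrightarrow> F s y) G"
proof -
  have "((\<lambda>x. (\<lambda>(s, y). F s y) (s, f x)) \<longlongrightarrow> (\<lambda>(s, y). F s y) (s, y)) G"
    by (rule continuous_on_tendsto_compose[OF assms(1)]) (intro tendsto_intros assms(3), use assms(2) in auto)
  then show ?thesis by simp
qed

section \<open>Monotone Picard iteration\<close>

definition picard_step :: "(real \<Rightarrow> real \<Rightarrow> real) \<Rightarrow> real \<Rightarrow> real \<Rightarrow> (real \<Rightarrow> real) \<Rightarrow> real \<Rightarrow> real"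
  where "picard_step F a y0 h t = y0 + integral {a..t} (\<lambda>s. F s (h s))"

primrec picard_iterate :: "(real \<Rightarrow> real \<Rightarrow> real) \<Rightarrow> real \<Rightarrow> real \<Rightarrow> nat \<Rightarrow> real \<Rightarrow> real"
  where
    "picard_iterate F a y0 0 = (\<lambda>_. y0)"
  | "picard_iterate F a y0 (Suc n) = picard_step F a y0 (picard_iterate F a y0 n)"

context
  fixes F :: "real \<Rightarrow> real \<Rightarrow> real" and a y0 :: real
  assumes cont: "continuous_on ({a..} \<times> UNIV) (\<lambda>(s, y). F s y)"
    and nonneg: "\<And>s y. a \<le> s \<Longrightarrow> y0 \<le> y \<Longrightarrow> 0 \<le> F s y"
    and mono: "\<And>s y z. a \<le> s \<Longrightarrow> y0 \<le> y \<Longrightarrow> y \<le> z \<Longrightarrow> F s y \<le> F s z"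
    and growth: "\<And>s y. a \<le> s \<Longrightarrow> y0 \<le> y \<Longrightarrow> F s y \<le> y"
begin

lemma picard_step_continuous:
  assumes "continuous_on {a..} h"
  shows "continuous_on {a..} (picard_step F a y0 h)"
  unfolding picard_step_def
  using integral_has_real_derivative_atLeast[OF continuous_on_compose_field[OF cont assms]]
  by (intro continuous_intros DERIV_continuous_on) auto

lemma picard_step_bounds:
  assumes hc: "continuous_on {a..} h"
    and lower: "\<And>s. a \<le> s \<Longrightarrow> y0 \<le> h s" and upper: "\<And>s. a \<le> s \<Longrightarrow> h s \<le> y0 * exp (s - a)"
    and t: "a \<le> t"
  shows "y0 \<le> picard_step F a y0 h t \<and> picard_step F a y0 h t \<le> y0 * exp (t - a)"
proof -
  have Fh: "continuous_on {a..t} (\<lambda>s. F s (h s))"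
    using continuous_on_compose_field[OF cont hc] by (rule continuous_on_subset) auto
  have "0 \<le> integral {a..t} (\<lambda>s. F s (h s))"
    using lower by (intro integral_nonneg integrable_continuous_real Fh nonneg) auto
  moreover have "integral {a..t} (\<lambda>s. F s (h s)) \<le> integral {a..t} (\<lambda>s. y0 * exp (s - a))"
  proof (intro integral_le integrable_continuous_real Fh)
    show "continuous_on {a..t} (\<lambda>s. y0 * exp (s - a))" by (intro continuous_intros)
    fix s assume "s \<in> {a..t}"
    then show "F s (h s) \<le> y0 * exp (s - a)"
      using growth[of s "h s"] lower[of s] upper[of s] by auto
  qed
  ultimately show ?thesis using integral_mult_exp_shift[OF t, of y0] by (simp add: picard_step_def)
qed

lemma picard_step_mono:
  assumes "continuous_on {a..} h" "continuous_on {a..} g"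
    and "\<And>s. a \<le> s \<Longrightarrow> y0 \<le> h s" "\<And>s. a \<le> s \<Longrightarrow> h s \<le> g s"
  shows "picard_step F a y0 h t \<le> picard_step F a y0 g t"
proof -
  have "integral {a..t} (\<lambda>s. F s (h s)) \<le> integral {a..t} (\<lambda>s. F s (g s))"
    using assms
    by (intro integral_le integrable_continuous_real mono continuous_on_subset[OF continuous_on_compose_field[OF cont]])
      auto
  then show ?thesis by (simp add: picard_step_def)
qed

lemma picard_initial_value_nonneg: "a \<le> t \<Longrightarrow> 0 \<le> y0"
  using nonneg[of t y0] growth[of t y0] by linarith

lemma picard_iterate_bounds:
  "continuous_on {a..} (picard_iterate F a y0 n) \<and>
   (\<forall>t\<ge>a. y0 \<le> picard_iterate F a y0 n t \<and> picard_iterate F a y0 n t \<le> y0 * exp (t - a))"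
proof (induction n)
  case 0
  have "y0 \<le> y0 * exp (t - a)" if "a \<le> t" for t
    using picard_initial_value_nonneg[OF that] that by (simp add: mult_le_cancel_left1)
  then show ?case by (simp add: continuous_on_const)
next
  case (Suc n)
  then show ?case using picard_step_continuous picard_step_bounds by simp
qed

lemma picard_iterate_incseq:
  assumes "a \<le> t"
  shows "picard_iterate F a y0 n t \<le> picard_iterate F a y0 (Suc n) t"
  using assms
proof (induction n arbitrary: t)
  case 0
  then show ?case using picard_iterate_bounds[of 1] by simp
next
  case (Suc n)
  have "picard_step F a y0 (picard_iterate F a y0 n) t
      \<le> picard_step F a y0 (picard_iterate F a y0 (Suc n)) t"
    using Suc picard_iterate_bounds[of n] picard_iterate_bounds[of "Suc n"]
    by (intro picard_step_mono) auto
  then show ?case by simp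
qed

lemma picard_limit_fixed_point:
  assumes lim: "\<And>s. a \<le> s \<Longrightarrow> (\<lambda>n. picard_iterate F a y0 n s) \<longlonglongrightarrow> h s" and t: "a \<le> t"
  shows "(\<lambda>s. F s (h s)) integrable_on {a..t} \<and> h t = picard_step F a y0 h t"
proof -
  let ?f = "\<lambda>n s. F s (picard_iterate F a y0 n s)"
  have mc: "(\<lambda>s. F s (h s)) integrable_on {a..t} \<and>
      (\<lambda>n. integral {a..t} (?f n)) \<longlonglongrightarrow> integral {a..t} (\<lambda>s. F s (h s))"
  proof (rule monotone_convergence_increasing)
    fix n
    show "?f n integrable_on {a..t}"
      using continuous_on_compose_field[OF cont, of "picard_iterate F a y0 n"] picard_iterate_bounds[of n]
      by (intro integrable_continuous_real) (auto elim: continuous_on_subset)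
  next
    fix n s assume "s \<in> {a..t}"
    then show "?f n s \<le> ?f (Suc n) s"
      using picard_iterate_bounds[of n] picard_iterate_incseq[of s n] by (intro mono) auto
  next
    fix s assume "s \<in> {a..t}"
    then show "(\<lambda>n. ?f n s) \<longlonglongrightarrow> F s (h s)"
      using lim by (intro tendsto_compose_field[OF cont]) auto
  next
    have "\<bar>integral {a..t} (?f n)\<bar> \<le> y0 * exp (t - a)" for n
      using picard_iterate_bounds[of "Suc n"] picard_initial_value_nonneg[OF t] t by (auto simp: picard_step_def)
    then show "bounded (range (\<lambda>n. integral {a..t} (?f n)))"
      unfolding bounded_real by auto
  qed
  have "(\<lambda>n. picard_iterate F a y0 (Suc n) t) \<longlonglongrightarrow> h t"
    using lim[OF t] by (rule LIMSEQ_Suc)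
  moreover have "(\<lambda>n. picard_iterate F a y0 (Suc n) t) \<longlonglongrightarrow> picard_step F a y0 h t"
    using mc by (auto simp: picard_step_def intro: tendsto_add)
  ultimately show ?thesis using mc LIMSEQ_unique by blast
qed

lemma monotone_ode_solution_exists:
  "\<exists>h. h a = y0 \<and> (\<forall>t\<ge>a. y0 \<le> h t \<and> (h has_real_derivative F t (h t)) (at t within {a..}))"
proof -
  define h where "h t = (SUP n. picard_iterate F a y0 n t)" for t
  have lim: "(\<lambda>n. picard_iterate F a y0 n t) \<longlonglongrightarrow> h t" if "a \<le> t" for t
    unfolding h_def using picard_iterate_bounds picard_iterate_incseq that
    by (intro LIMSEQ_incseq_SUP bdd_aboveI[of _ "y0 * exp (t - a)"] incseq_SucI) auto
  have lower: "y0 \<le> h t" if "a \<le> t" for t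
    using lim[OF that] picard_iterate_bounds that by (intro LIMSEQ_le_const) auto
  note fixed_point = picard_limit_fixed_point[OF lim]
  have hc: "continuous_on {a..} h"
  proof (rule continuous_on_atLeast_if_Icc)
    fix b assume "a < b"
    then have "continuous_on {a..b} (picard_step F a y0 h)"
      using fixed_point[of b] unfolding picard_step_def
      by (intro continuous_intros indefinite_integral_continuous_1) auto
    then show "continuous_on {a..b} h"
      by (rule continuous_on_eq) (use fixed_point in auto)
  qed
  have "(h has_real_derivative F t (h t)) (at t within {a..})" if t: "a \<le> t" for t
  proof (rule has_field_derivative_transform_within[where d=1])
    show "(picard_step F a y0 h has_real_derivative F t (h t)) (at t within {a..})"
      unfolding picard_step_def[abs_def]
      using integral_has_real_derivative_atLeast[OF continuous_on_compose_field[OF cont hc] t]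
      by (auto intro: derivative_eq_intros)
  qed (use fixed_point t in auto)
  moreover have "h a = y0"
    using fixed_point[of a] by (simp add: picard_step_def)
  ultimately show ?thesis using lower by blast
qed

end

section \<open>Uniqueness of solutions in \<open>R0\<close>\<close>

lemma less_power2_if_sqrt_less:
  fixes x y :: real
  assumes "sqrt x < y"
  shows "x < y\<^sup>2"
proof (cases "0 \<le> x")
  case True
  then have "(sqrt x)\<^sup>2 < y\<^sup>2" using assms by (intro power_strict_mono) auto
  then show ?thesis using True by simp
next
  case False
  then show ?thesis using zero_le_power2[of y] by linarith
qed

lemma sqrt_diff_eq_divide:
  fixes x y :: real
  assumes "0 \<le> x" "0 \<le> y" "0 < sqrt x + sqrt y"
  shows "sqrt x - sqrt y = (x - y) / (sqrt x + sqrt y)"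
proof -
  have "(sqrt x - sqrt y) * (sqrt x + sqrt y) = x - y"
    using assms by (simp add: algebra_simps)
  then show ?thesis using assms(3) by (simp add: field_simps)
qed

lemma linear_ode_zero_initial_value:
  fixes d c :: "real \<Rightarrow> real"
  assumes c: "continuous_on {a..b} c"
    and d: "\<And>x. x \<in> {a..b} \<Longrightarrow> (d has_real_derivative c x * d x) (at x within {a..b})"
    and "d a = 0" "t \<in> {a..b}"
  shows "d t = 0"
proof -
  define C where "C x = integral {a..x} c" for x
  define f where "f x = d x * exp (- C x)" for x
  have "(f has_real_derivative 0) (at x within {a..b})" if x: "x \<in> {a..b}" for x
  proof -
    have "(C has_real_derivative c x) (at x within {a..b})"
      unfolding C_def using c x by (rule integral_has_real_derivative)
    then have "(f has_real_derivative c x * d x * exp (- C x) + d x * (exp (- C x) * - c x))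
        (at x within {a..b})"
      unfolding f_def using d[OF x] by (auto intro!: derivative_eq_intros)
    then show ?thesis by (simp add: algebra_simps)
  qed
  then obtain k where "\<forall>x\<in>{a..b}. f x = k"
    using has_field_derivative_zero_constant[of "{a..b}" f] by auto
  then have "f t = f a" using assms(4) by auto
  then show ?thesis using \<open>d a = 0\<close> by (simp add: f_def)
qed

lemma ode_sol_in_R0_subset:
  assumes "ode_sol_in_R0 v phi0 h0 I h dh" "K \<subseteq> I"
  shows "ode_sol_in_R0 v phi0 h0 K h dh"
  using assms unfolding ode_sol_in_R0_def by (auto intro: has_field_derivative_subset)

lemma ode_sol_in_R0_D:
  assumes "ode_sol_in_R0 v phi0 h0 I h dh" "x \<in> I"
  shows "(h has_real_derivative dh x) (at x within I)"
    and "dh x = sqrt ((h x)\<^sup>2 - v x)"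
    and "v x < (h x)\<^sup>2"
  using assms unfolding ode_sol_in_R0_def by (blast intro: less_power2_if_sqrt_less)+

lemma ode_sol_in_R0_continuous:
  assumes sol: "ode_sol_in_R0 v phi0 h0 I h dh" and vc: "continuous_on I v"
  shows "continuous_on I h" and "continuous_on I dh"
proof -
  show hc: "continuous_on I h" using ode_sol_in_R0_D(1)[OF sol] by (rule DERIV_continuous_on)
  have "continuous_on I (\<lambda>x. sqrt ((h x)\<^sup>2 - v x))" by (intro continuous_intros hc vc)
  then show "continuous_on I dh" by (rule continuous_on_eq) (simp add: ode_sol_in_R0_D(2)[OF sol])
qed

lemma ode_sol_in_R0_unique:
  assumes s1: "ode_sol_in_R0 v phi0 h0 I h1 dh1" and s2: "ode_sol_in_R0 v phi0 h0 J h2 dh2"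
    and sub: "{phi0..t} \<subseteq> I" "{phi0..t} \<subseteq> J"
    and vc: "continuous_on {phi0..t} v" and t: "phi0 \<le> t"
  shows "h1 t = h2 t"
proof -
  let ?K = "{phi0..t}"
  have K1: "ode_sol_in_R0 v phi0 h0 ?K h1 dh1" using s1 sub(1) by (rule ode_sol_in_R0_subset)
  have K2: "ode_sol_in_R0 v phi0 h0 ?K h2 dh2" using s2 sub(2) by (rule ode_sol_in_R0_subset)
  note d1 = ode_sol_in_R0_D(1)[OF K1] and e1 = ode_sol_in_R0_D(2)[OF K1]
    and d2 = ode_sol_in_R0_D(1)[OF K2] and e2 = ode_sol_in_R0_D(2)[OF K2]
  have denom_pos: "0 < dh2 x + dh1 x" if "x \<in> ?K" for x
    using ode_sol_in_R0_D(3)[OF K1 that] ode_sol_in_R0_D(3)[OF K2 that]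
    unfolding e1[OF that] e2[OF that] by (simp add: add_pos_pos)
  define c where "c x = (h2 x + h1 x) / (dh2 x + dh1 x)" for x
  have c_cont: "continuous_on ?K c"
    unfolding c_def
    by (intro continuous_intros ode_sol_in_R0_continuous[OF K1 vc] ode_sol_in_R0_continuous[OF K2 vc])
      (auto dest: denom_pos)
  have diff_deriv: "((\<lambda>x. h2 x - h1 x) has_real_derivative c x * (h2 x - h1 x)) (at x within ?K)"
    if x: "x \<in> ?K" for x
  proof -
    have "dh2 x - dh1 x = ((h2 x)\<^sup>2 - (h1 x)\<^sup>2) / (dh2 x + dh1 x)"
      using ode_sol_in_R0_D(3)[OF K1 x] ode_sol_in_R0_D(3)[OF K2 x] denom_pos[OF x]
      unfolding e1[OF x] e2[OF x] by (subst sqrt_diff_eq_divide) auto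
    also have "\<dots> = c x * (h2 x - h1 x)"
      unfolding c_def power2_eq_square square_diff_square_factored by (simp only: times_divide_eq_left)
    finally show ?thesis using d1[OF x] d2[OF x] by (auto intro!: derivative_eq_intros)
  qed
  have "h2 phi0 - h1 phi0 = 0" using s1 s2 by (simp add: ode_sol_in_R0_def)
  then have "h2 t - h1 t = 0"
    using linear_ode_zero_initial_value[OF c_cont diff_deriv] t by simp
  then show ?thesis by simp
qed

section \<open>The dichotomy\<close>

lemma first_crossing:
  fixes f g :: "real \<Rightarrow> real"
  assumes f: "continuous_on {a..} f" and g: "continuous_on {a..} g"
    and start: "f a < g a" and cross: "a \<le> t" "g t \<le> f t"
  shows "\<exists>c>a. g c = f c \<and> (\<forall>s\<in>{a..<c}. f s < g s)"
proof -
  define S where "S = {s \<in> {a..}. g s \<le> f s}"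
  have "closed S" unfolding S_def using f g by (intro continuous_on_closed_Collect_le) auto
  moreover have "S \<noteq> {}" "bdd_below S" using cross by (auto simp: S_def intro: bdd_belowI)
  ultimately have c_in: "Inf S \<in> S" by (intro closed_contains_Inf)
  define c where "c = Inf S"
  have c_le: "g c \<le> f c" and "a \<le> c" using c_in by (auto simp: S_def c_def)
  then have "a < c" using start by (cases "a = c") auto
  have before: "f s < g s" if "s \<in> {a..<c}" for s
  proof (rule ccontr)
    assume "\<not> f s < g s"
    then have "s \<in> S" using that by (auto simp: S_def)
    then show False using that \<open>bdd_below S\<close> by (auto simp: c_def dest: cInf_lower)
  qed
  have "f c \<le> g c"
  proof (rule tendsto_le[OF trivial_limit_at_left_real
        continuous_on_atLeast_at_leftD[OF g \<open>a < c\<close>] continuous_on_atLeast_at_leftD[OF f \<open>a < c\<close>]])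
    show "\<forall>\<^sub>F s in at_left c. f s \<le> g s"
      using eventually_at_left_real[OF \<open>a < c\<close>] by eventually_elim (use before in \<open>fastforce intro: less_imp_le\<close>)
  qed
  with c_le show ?thesis using \<open>a < c\<close> before by (intro exI[of _ c]) auto
qed

definition ode_rhs_truncated :: "(real \<Rightarrow> real) \<Rightarrow> real \<Rightarrow> real \<Rightarrow> real" where
  "ode_rhs_truncated v s y = sqrt (max (y\<^sup>2 - v s) 0)"

lemma continuous_on_ode_rhs_truncated:
  "continuous_on S v \<Longrightarrow> continuous_on (S \<times> UNIV) (\<lambda>(s, y). ode_rhs_truncated v s y)"
  unfolding ode_rhs_truncated_def case_prod_beta
  by (intro continuous_intros continuous_on_compose2[of S v _ fst]) auto

lemma ode_rhs_truncated_nonneg: "0 \<le> ode_rhs_truncated v s y"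
  by (simp add: ode_rhs_truncated_def)

lemma ode_rhs_truncated_mono:
  "0 \<le> y \<Longrightarrow> y \<le> z \<Longrightarrow> ode_rhs_truncated v s y \<le> ode_rhs_truncated v s z"
  unfolding ode_rhs_truncated_def by (intro real_sqrt_le_mono max.mono power_mono diff_right_mono) auto

lemma ode_rhs_truncated_le:
  assumes "0 \<le> y" "0 \<le> v s"
  shows "ode_rhs_truncated v s y \<le> y"
proof -
  have "ode_rhs_truncated v s y \<le> sqrt (y\<^sup>2)"
    unfolding ode_rhs_truncated_def using assms by (intro real_sqrt_le_mono) auto
  then show ?thesis using assms by simp
qed

lemma ode_rhs_truncated_above_boundary:
  "sqrt (v s) < y \<Longrightarrow> ode_rhs_truncated v s y = sqrt (y\<^sup>2 - v s)"
  using less_power2_if_sqrt_less[of "v s" y] by (simp add: ode_rhs_truncated_def)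

lemma ode_rhs_truncated_on_boundary:
  "0 \<le> v s \<Longrightarrow> ode_rhs_truncated v s (sqrt (v s)) = 0"
  by (simp add: ode_rhs_truncated_def)

lemma ode_rhs_truncated_solution_exists:
  assumes vc: "continuous_on {phi0..} v" and vnn: "\<And>s. phi0 \<le> s \<Longrightarrow> 0 \<le> v s"
    and "0 \<le> h0"
  shows "\<exists>h. h phi0 = h0 \<and>
    (\<forall>t\<ge>phi0. (h has_real_derivative ode_rhs_truncated v t (h t)) (at t within {phi0..}))"
proof -
  have "\<exists>h. h phi0 = h0 \<and> (\<forall>t\<ge>phi0. h0 \<le> h t \<and>
      (h has_real_derivative ode_rhs_truncated v t (h t)) (at t within {phi0..}))"
  proof (rule monotone_ode_solution_exists[where F = "ode_rhs_truncated v"])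
    show "continuous_on ({phi0..} \<times> UNIV) (\<lambda>(s, y). ode_rhs_truncated v s y)"
      using vc by (rule continuous_on_ode_rhs_truncated)
    fix s y z
    assume "phi0 \<le> s" "h0 \<le> y"
    then show "0 \<le> ode_rhs_truncated v s y" "ode_rhs_truncated v s y \<le> y"
      using \<open>0 \<le> h0\<close> vnn by (auto intro: ode_rhs_truncated_nonneg ode_rhs_truncated_le)
    assume "y \<le> z"
    then show "ode_rhs_truncated v s y \<le> ode_rhs_truncated v s z"
      using \<open>0 \<le> h0\<close> \<open>h0 \<le> y\<close> by (auto intro: ode_rhs_truncated_mono)
  qed
  then show ?thesis by blast
qed

lemma ode_sol_in_R0_if_truncated_above_boundary:
  assumes "h phi0 = h0"
    and "\<And>t. t \<in> I \<Longrightarrow> (h has_real_derivative ode_rhs_truncated v t (h t)) (at t within I)"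
    and "\<And>t. t \<in> I \<Longrightarrow> sqrt (v t) < h t"
  shows "ode_sol_in_R0 v phi0 h0 I h (\<lambda>t. ode_rhs_truncated v t (h t))"
  using assms unfolding ode_sol_in_R0_def by (auto intro: ode_rhs_truncated_above_boundary)

lemma ode_sol_in_R0_hits_boundary_or_global:
  assumes vc: "continuous_on {phi0..} v" and vnn: "\<And>s. phi0 \<le> s \<Longrightarrow> 0 \<le> v s"
    and h0: "sqrt (v phi0) < h0"
  shows "(\<exists>phi1 > phi0. \<exists>h dh. ode_sol_in_R0 v phi0 h0 {phi0..<phi1} h dh
            \<and> (h \<longlongrightarrow> sqrt (v phi1)) (at_left phi1) \<and> (dh \<longlongrightarrow> 0) (at_left phi1))
       \<or> (\<exists>h dh. ode_sol_in_R0 v phi0 h0 {phi0..} h dh)"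
proof -
  have "0 \<le> h0" using h0 real_sqrt_ge_zero[of "v phi0"] vnn[of phi0] by linarith
  then obtain h where h_init: "h phi0 = h0" and h_deriv: "\<And>t. phi0 \<le> t \<Longrightarrow>
      (h has_real_derivative ode_rhs_truncated v t (h t)) (at t within {phi0..})"
    using ode_rhs_truncated_solution_exists[OF vc vnn] by blast
  define dh where "dh t = ode_rhs_truncated v t (h t)" for t
  have hc: "continuous_on {phi0..} h"
    using h_deriv by (intro DERIV_continuous_on) auto
  have sol: "ode_sol_in_R0 v phi0 h0 I h dh"
    if "I \<subseteq> {phi0..}" "\<And>t. t \<in> I \<Longrightarrow> sqrt (v t) < h t" for I
    unfolding dh_def using that h_init h_deriv
    by (intro ode_sol_in_R0_if_truncated_above_boundary) (auto intro: has_field_derivative_subset)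
  show ?thesis
  proof (cases "\<forall>t\<ge>phi0. sqrt (v t) < h t")
    case True
    then show ?thesis using sol[of "{phi0..}"] by auto
  next
    case False
    then obtain t where "phi0 \<le> t" "h t \<le> sqrt (v t)" by (auto simp: not_less)
    moreover have "continuous_on {phi0..} (\<lambda>s. sqrt (v s))"
      by (intro continuous_intros vc)
    ultimately obtain phi1 where "phi0 < phi1" and hit: "h phi1 = sqrt (v phi1)"
      and above: "\<forall>s\<in>{phi0..<phi1}. sqrt (v s) < h s"
      using first_crossing[of phi0 "\<lambda>s. sqrt (v s)" h] hc h_init h0 by auto
    have "(h \<longlongrightarrow> sqrt (v phi1)) (at_left phi1)"
      using continuous_on_atLeast_at_leftD[OF hc \<open>phi0 < phi1\<close>] hit by simp
    moreover have "continuous_on {phi0..} dh"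
      unfolding dh_def by (rule continuous_on_compose_field[OF continuous_on_ode_rhs_truncated[OF vc] hc])
    then have "(dh \<longlongrightarrow> 0) (at_left phi1)"
      using continuous_on_atLeast_at_leftD[of phi0 dh phi1] hit vnn[of phi1] \<open>phi0 < phi1\<close>
      by (simp add: dh_def ode_rhs_truncated_on_boundary)
    moreover have "ode_sol_in_R0 v phi0 h0 {phi0..<phi1} h dh"
      using above by (intro sol) auto
    ultimately show ?thesis using \<open>phi0 < phi1\<close> by blast
  qed
qed

lemma ode_sol_in_R0_global_never_hits_boundary:
  assumes global: "ode_sol_in_R0 v phi0 h0 {phi0..} h dh"
    and local: "ode_sol_in_R0 v phi0 h0 {phi0..<phi1} g dg" and "phi0 < phi1"
    and vc: "continuous_on {phi0..} v"
  shows "\<not> (g \<longlongrightarrow> sqrt (v phi1)) (at_left phi1)"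
proof
  assume lim: "(g \<longlongrightarrow> sqrt (v phi1)) (at_left phi1)"
  have agree: "g s = h s" if "s \<in> {phi0..<phi1}" for s
    using that vc
    by (intro ode_sol_in_R0_unique[OF local global]) (auto elim: continuous_on_subset)
  have "\<forall>\<^sub>F s in at_left phi1. g s = h s"
    using eventually_at_left_real[OF \<open>phi0 < phi1\<close>] by eventually_elim (auto intro: agree)
  with lim have "(h \<longlongrightarrow> sqrt (v phi1)) (at_left phi1)"
    by (rule Lim_transform_eventually)
  moreover have "(h \<longlongrightarrow> h phi1) (at_left phi1)"
    using ode_sol_in_R0_continuous(1)[OF global vc] \<open>phi0 < phi1\<close>
    by (rule continuous_on_atLeast_at_leftD)
  ultimately have "h phi1 = sqrt (v phi1)"
    using tendsto_unique trivial_limit_at_left_real by blast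
  moreover have "sqrt (v phi1) < h phi1"
    using global \<open>phi0 < phi1\<close> unfolding ode_sol_in_R0_def by auto
  ultimately show False by simp
qed

theorem proposition2:
  fixes v :: "real \<Rightarrow> real" and phi0 h0 :: real
  assumes smooth: "\<forall>n. \<forall>x\<ge>phi0. ((deriv ^^ n) v) differentiable (at x)"
    and vpos: "\<forall>x\<ge>phi0. v x > 0"
    and vderiv_pos: "\<forall>x\<ge>phi0. deriv v x > 0"
    and h0: "h0 > sqrt (v phi0)"
  shows "(\<exists>phi1 > phi0. \<exists>h dh. ode_sol_in_R0 v phi0 h0 {phi0..<phi1} h dh
            \<and> (h \<longlongrightarrow> sqrt (v phi1)) (at_left phi1)
            \<and> (dh \<longlongrightarrow> 0) (at_left phi1))
       \<noteq> (\<exists>h dh. ode_sol_in_R0 v phi0 h0 {phi0..} h dh)"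
proof -
  have "\<forall>x\<ge>phi0. v differentiable (at x)"
    using spec[OF smooth, of 0] by simp
  then have vc: "continuous_on {phi0..} v"
    by (auto intro!: continuous_at_imp_continuous_on differentiable_imp_continuous_within)
  have "\<And>s. phi0 \<le> s \<Longrightarrow> 0 \<le> v s" using vpos by (simp add: less_imp_le)
  then show ?thesis
    using ode_sol_in_R0_hits_boundary_or_global[OF vc _ h0]
      ode_sol_in_R0_global_never_hits_boundary[OF _ _ _ vc]
    by blast
qed

end
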